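(* Let $\mu\in(0,1]$, let $X\subset\mathbb{R}^d$ be a complementary regular set with $\operatorname{reach}_\mu(X)>0$, and let $x\in\partial X$. Then $\operatorname{Tan}(\mathcal{C}X,x)$ contains a closed ball of radius $\mu$ centered at some unit vector.
   Context: $d_A(y)=\inf_{a\in A}\|y-a\|$; $\mathcal{C}A:=\overline{\mathbb{R}^d\setminus A}$; $\partial A=\overline A\setminus\operatorname{int}A$. Clarke gradient $\partial\phi(y)$: convex hull of limits $\lim_i\nabla\phi(y_i)$, $y_i\to y$, $\phi$ differentiable at $y_i$; $\Delta(B)=\inf_{b\in B}\|b\|$. Reach of closed $A$: supremum of $t\ge0$ such that every $y$ with $d_A(y)<t$ has a unique nearest point in $A$. $\operatorname{reach}_\mu(A)=\sup\{s:\Delta(\partial d_A(y))\ge\mu\text{ for all }y\text{ with }0<d_A(y)\le s\}$. Complementary regular: compact $X$ with $\overline{\operatorname{int}X}=X$, $\operatorname{reach}_{\mu'}(X)>0$ for some $\mu'\in(0,1]$, $\operatorname{reach}(\mathcal{C}X)>0$. Tangent cone $\operatorname{Tan}(A,x)$: cone generated by limits $(x_n-x)/\|x_n-x\|$, $x_n\in A\setminus\{x\}$, $x_n\to x$. *)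

theory Defs
  imports "HOL-Analysis.Analysis"
begin

text \<open>Distance function d_A(y) = inf over a in A of norm (y - a): the library's infdist.\<close>

definition ccompl :: "'a::euclidean_space set \<Rightarrow> 'a set" where
  "ccompl A = closure (UNIV - A)"

definition grad_limits :: "('a::euclidean_space \<Rightarrow> real) \<Rightarrow> 'a \<Rightarrow> 'a set" where
  "grad_limits phi y = {v. \<exists>ys g. ys \<longlonglongrightarrow> y \<and>
      (\<forall>i. (phi has_derivative (\<lambda>h. g i \<bullet> h)) (at (ys i))) \<and> g \<longlonglongrightarrow> v}"

definition clarke_grad :: "('a::euclidean_space \<Rightarrow> real) \<Rightarrow> 'a \<Rightarrow> 'a set" where
  "clarke_grad phi y = convex hull (grad_limits phi y)"

definition Delta :: "'a::euclidean_space set \<Rightarrow> real" where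
  "Delta B = Inf (norm ` B)"

text \<open>Reach (valued in extended reals, as it may be infinite).\<close>
definition reach :: "'a::euclidean_space set \<Rightarrow> ereal" where
  "reach A = Sup (ereal ` {t. t \<ge> 0 \<and>
      (\<forall>y. infdist y A < t \<longrightarrow> (\<exists>!a. a \<in> A \<and> dist y a = infdist y A))})"

definition reach_mu :: "real \<Rightarrow> 'a::euclidean_space set \<Rightarrow> ereal" where
  "reach_mu mu A = Sup (ereal ` {s. \<forall>y. 0 < infdist y A \<and> infdist y A \<le> s \<longrightarrow>
      Delta (clarke_grad (\<lambda>z. infdist z A) y) \<ge> mu})"

definition complementary_regular :: "'a::euclidean_space set \<Rightarrow> bool" where
  "complementary_regular X \<longleftrightarrow> compact X \<and> closure (interior X) = X \<and>
     (\<exists>mu'. 0 < mu' \<and> mu' \<le> 1 \<and> reach_mu mu' X > 0) \<and> reach (ccompl X) > 0"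

definition tan_dirs :: "'a::euclidean_space set \<Rightarrow> 'a \<Rightarrow> 'a set" where
  "tan_dirs A x = {v. \<exists>xn. (\<forall>n. xn n \<in> A - {x}) \<and> xn \<longlonglongrightarrow> x \<and>
      (\<lambda>n. (xn n - x) /\<^sub>R norm (xn n - x)) \<longlonglongrightarrow> v}"

definition Tan :: "'a::euclidean_space set \<Rightarrow> 'a \<Rightarrow> 'a set" where
  "Tan A x = {c *\<^sub>R v | c v. 0 \<le> c \<and> v \<in> tan_dirs A x}"

end

theory Submission
  imports Defs
begin

text \<open>
  Take y0 outside X very close to the boundary point x and maximise d(y) - c |y - y0| over
  the ball of radius R about y0, where d is the distance to X and c < \<mu>.
  For a nearest point a of y, d is squeezed between d(y) - |q - y| and |q - a|, so it is
  differentiable on the open segment from a to y with gradient (y - a) / d(y); these unit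
  vectors therefore lie in the Clarke gradient, and its lower bound \<mu> gives a unit vector w
  with w \<bullet> n \<ge> \<mu> for every such n. Then d grows at rate greater than c along w, so the
  maximiser lies on the sphere: there is y with |y - y0| = R and d(y) > c R, i.e. the ball
  of radius c R about y misses X.
  Letting R \<rightarrow> 0, c \<rightarrow> \<mu> and y0 \<rightarrow> x faster than R, the unit vectors (y - y0) / R
  accumulate at some u, and every v with |v - u| \<le> \<mu> is a limit of rescaled points
  outside X, i.e. a tangent vector of the closed complement.
\<close>

lemma has_derivative_squeeze:
  fixes f g h :: "'a::real_normed_vector \<Rightarrow> real"
  assumes lower: "\<And>q. g q \<le> f q" and upper: "\<And>q. f q \<le> h q" and touch: "g z = h z"
    and g: "(g has_derivative D) (at z)" and h: "(h has_derivative D) (at z)"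
  shows "(f has_derivative D) (at z)"
proof -
  have fz: "f z = g z" "f z = h z" using lower[of z] upper[of z] touch by auto
  let ?quot = "\<lambda>\<phi> q. norm (\<phi> q - \<phi> z - D (q - z)) / norm (q - z)"
  have "(?quot g \<longlongrightarrow> 0) (at z)" "(?quot h \<longlongrightarrow> 0) (at z)"
    using g h by (simp_all only: has_derivative_iff_norm)
  then have lim: "((\<lambda>q. ?quot g q + ?quot h q) \<longlongrightarrow> 0) (at z)"
    by (rule tendsto_add_zero)
  have bound: "?quot f q \<le> ?quot g q + ?quot h q" for q
  proof -
    have "\<bar>f q - f z - D (q - z)\<bar> \<le> \<bar>g q - g z - D (q - z)\<bar> + \<bar>h q - h z - D (q - z)\<bar>"
      using lower[of q] upper[of q] fz by linarith
    then have "?quot f q \<le> (\<bar>g q - g z - D (q - z)\<bar> + \<bar>h q - h z - D (q - z)\<bar>) / norm (q - z)"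
      by (simp add: divide_right_mono)
    then show ?thesis by (simp only: add_divide_distrib real_norm_def)
  qed
  have "(?quot f \<longlongrightarrow> 0) (at z)"
    by (rule tendsto_sandwich[OF always_eventually always_eventually tendsto_const lim])
       (simp, use bound in blast)
  moreover have "bounded_linear D" using g by (rule has_derivative_bounded_linear)
  ultimately show ?thesis unfolding has_derivative_iff_norm by blast
qed

lemma has_derivative_norm_diff:
  fixes a z :: "'a::real_inner"
  assumes "z \<noteq> a"
  shows "((\<lambda>q. norm (q - a)) has_derivative (\<lambda>h. h \<bullet> sgn (z - a))) (at z)"
  using has_derivative_compose[OF has_derivative_diff[OF has_derivative_ident has_derivative_const]
      has_derivative_norm[of "z - a"]] assms by simp

lemma infdist_has_derivative_on_nearest_segment:
  fixes X :: "'a::real_inner set"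
  assumes "a \<in> X" and nearest: "dist y a = infdist y X" and pos: "0 < infdist y X"
    and "0 < l" and "l < 1"
  shows "((\<lambda>q. infdist q X) has_derivative (\<lambda>h. ((y - a) /\<^sub>R infdist y X) \<bullet> h))
           (at (a + l *\<^sub>R (y - a)))"
proof -
  define d where "d = infdist y X"
  define z where "z = a + l *\<^sub>R (y - a)"
  have ya: "norm (y - a) = d" using nearest by (simp add: d_def dist_norm)
  have za: "z - a = l *\<^sub>R (y - a)" and yz: "y - z = (1 - l) *\<^sub>R (y - a)"
    by (simp_all add: z_def algebra_simps)
  have "0 < d" using pos by (simp add: d_def)
  then have "z \<noteq> a" "z \<noteq> y" using za yz ya \<open>0 < l\<close> \<open>l < 1\<close> by auto
  have sgn_za: "sgn (z - a) = (y - a) /\<^sub>R d" and sgn_yz: "sgn (y - z) = (y - a) /\<^sub>R d"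
    using \<open>0 < l\<close> \<open>l < 1\<close> \<open>0 < d\<close> by (simp_all add: za yz ya sgn_div_norm)
  show ?thesis unfolding d_def[symmetric] z_def[symmetric]
  proof (rule has_derivative_squeeze)
    show "d - norm (q - y) \<le> infdist q X" for q
      using infdist_triangle[of y X q] by (simp add: d_def dist_norm norm_minus_commute)
    show "infdist q X \<le> norm (q - a)" for q
      using infdist_le[OF \<open>a \<in> X\<close>, of q] by (simp add: dist_norm)
    have "norm (z - y) = (1 - l) * d" using yz ya \<open>l < 1\<close> by (simp add: norm_minus_commute[of z y])
    moreover have "norm (z - a) = l * d" using za ya \<open>0 < l\<close> by simp
    ultimately show "d - norm (z - y) = norm (z - a)" by (simp add: algebra_simps)
    show "((\<lambda>q. norm (q - a)) has_derivative (\<lambda>h. ((y - a) /\<^sub>R d) \<bullet> h)) (at z)"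
      using has_derivative_norm_diff[OF \<open>z \<noteq> a\<close>] by (simp add: sgn_za inner_commute)
    have "((\<lambda>q. d - norm (q - y)) has_derivative (\<lambda>h. 0 - h \<bullet> sgn (z - y))) (at z)"
      by (intro has_derivative_diff has_derivative_const has_derivative_norm_diff \<open>z \<noteq> y\<close>)
    then show "((\<lambda>q. d - norm (q - y)) has_derivative (\<lambda>h. ((y - a) /\<^sub>R d) \<bullet> h)) (at z)"
      using sgn_yz by (simp add: sgn_minus[of "y - z", simplified] inner_commute)
  qed
qed

lemma nearest_direction_in_grad_limits:
  fixes X :: "'a::euclidean_space set"
  assumes "a \<in> X" and "dist y a = infdist y X" and "0 < infdist y X"
  shows "(y - a) /\<^sub>R infdist y X \<in> grad_limits (\<lambda>q. infdist q X) y"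
proof -
  define l :: "nat \<Rightarrow> real" where "l i = 1 - 1 / (real i + 2)" for i
  have "l \<longlonglongrightarrow> 1" unfolding l_def by real_asymp
  then have "(\<lambda>i. a + l i *\<^sub>R (y - a)) \<longlonglongrightarrow> a + 1 *\<^sub>R (y - a)"
    by (intro tendsto_intros)
  then have lim: "(\<lambda>i. a + l i *\<^sub>R (y - a)) \<longlonglongrightarrow> y" by simp
  have deriv: "((\<lambda>q. infdist q X) has_derivative (\<lambda>h. ((y - a) /\<^sub>R infdist y X) \<bullet> h))
      (at (a + l i *\<^sub>R (y - a)))" for i
    by (rule infdist_has_derivative_on_nearest_segment[OF assms]) (simp_all add: l_def)
  show ?thesis
    unfolding grad_limits_def mem_Collect_eq
    by (rule exI[of _ "\<lambda>i. a + l i *\<^sub>R (y - a)"], rule exI[of _ "\<lambda>_. (y - a) /\<^sub>R infdist y X"])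
       (intro conjI allI lim deriv tendsto_const)
qed

lemma Delta_le_norm: "b \<in> B \<Longrightarrow> Delta B \<le> norm b"
  unfolding Delta_def by (rule cInf_lower) (simp_all add: bdd_below_def, use norm_ge_zero in blast)

lemma exists_unit_vector_inner_ge:
  fixes N :: "'a::euclidean_space set"
  assumes "compact N" and "N \<noteq> {}" and "0 < m" and hull_norm: "\<And>p. p \<in> convex hull N \<Longrightarrow> m \<le> norm p"
  shows "\<exists>w. norm w = 1 \<and> (\<forall>n\<in>N. m \<le> w \<bullet> n)"
proof -
  have "closed (convex hull N)"
    using \<open>compact N\<close> by (simp add: compact_imp_closed compact_convex_hull)
  moreover have "convex hull N \<noteq> {}" using \<open>N \<noteq> {}\<close> by simp
  ultimately obtain p where p: "p \<in> convex hull N"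
    and p_min: "\<And>q. q \<in> convex hull N \<Longrightarrow> dist 0 p \<le> dist 0 q"
    using distance_attains_inf[of "convex hull N" 0] by blast
  have "m \<le> norm p" using hull_norm[OF p] .
  then have "0 < norm p" using \<open>0 < m\<close> by linarith
  have "m \<le> (p /\<^sub>R norm p) \<bullet> n" if "n \<in> N" for n
  proof -
    have "(0 - p) \<bullet> (n - p) \<le> 0"
      using any_closest_point_dot[OF convex_convex_hull \<open>closed (convex hull N)\<close> p
          hull_inc[OF that] ballI[OF p_min]] by simp
    then have "norm p * norm p \<le> p \<bullet> n"
      by (simp add: inner_diff_right dot_square_norm power2_eq_square)
    then have "norm p \<le> (p /\<^sub>R norm p) \<bullet> n" using \<open>0 < norm p\<close> by (simp add: field_simps)
    then show ?thesis using \<open>m \<le> norm p\<close> by linarith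
  qed
  moreover have "norm (p /\<^sub>R norm p) = 1" using \<open>0 < norm p\<close> by simp
  ultimately show ?thesis by blast
qed

lemma nearest_points_unit_separation:
  fixes X :: "'a::euclidean_space set"
  assumes "compact X" and pos: "0 < infdist y X" and "0 < mu"
    and Delta_ge: "mu \<le> Delta (clarke_grad (\<lambda>q. infdist q X) y)"
  shows "\<exists>w. norm w = 1 \<and> (\<forall>a\<in>X. dist y a = infdist y X \<longrightarrow> mu * infdist y X \<le> w \<bullet> (y - a))"
proof -
  define d where "d = infdist y X"
  define P where "P = {a\<in>X. dist y a = d}"
  define N where "N = (\<lambda>a. (y - a) /\<^sub>R d) ` P"
  have "X \<noteq> {}" using pos by (auto simp: infdist_def)
  then obtain a where "a \<in> X" "infdist y X = dist y a"
    using infdist_attains_inf[OF compact_imp_closed[OF \<open>compact X\<close>]] by blast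
  then have "N \<noteq> {}" by (auto simp: N_def P_def d_def)
  have "compact P"
  proof -
    have "P = X \<inter> (\<lambda>a. dist y a) -` {d}" by (auto simp: P_def)
    then show ?thesis
      using \<open>compact X\<close>
      by (simp add: compact_Int_closed closed_vimage continuous_on_dist continuous_on_id)
  qed
  then have "compact N"
    unfolding N_def by (intro compact_continuous_image) (intro continuous_intros)
  have "N \<subseteq> grad_limits (\<lambda>q. infdist q X) y"
    unfolding N_def P_def d_def using nearest_direction_in_grad_limits[OF _ _ pos] by blast
  then have "convex hull N \<subseteq> clarke_grad (\<lambda>q. infdist q X) y"
    unfolding clarke_grad_def by (rule hull_mono)
  then have "mu \<le> norm p" if "p \<in> convex hull N" for p
    using Delta_ge Delta_le_norm[of p] that by (meson order_trans subsetD)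
  then obtain w where "norm w = 1" and w: "\<forall>n\<in>N. mu \<le> w \<bullet> n"
    using exists_unit_vector_inner_ge[OF \<open>compact N\<close> \<open>N \<noteq> {}\<close> \<open>0 < mu\<close>] by blast
  have "mu * d \<le> w \<bullet> (y - a)" if "a \<in> X" "dist y a = d" for a
  proof -
    have "mu \<le> w \<bullet> ((y - a) /\<^sub>R d)" using w that by (auto simp: N_def P_def)
    then have "mu \<le> (w \<bullet> (y - a)) / d" by (simp add: divide_inverse_commute)
    then show ?thesis using pos by (simp add: d_def pos_le_divide_eq)
  qed
  then show ?thesis using \<open>norm w = 1\<close> by (auto simp: d_def)
qed

lemma norm_add_scaleR_unit_ge:
  fixes v w :: "'a::real_inner"
  assumes "norm w = 1" and "0 \<le> d" and "d \<le> norm v" and "0 \<le> t" and "0 \<le> c" and "c \<le> 1"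
    and "c * d \<le> w \<bullet> v"
  shows "d + c * t \<le> norm (v + t *\<^sub>R w)"
proof (rule power2_le_imp_le)
  have "d\<^sup>2 \<le> (norm v)\<^sup>2" using assms(2,3) by (simp add: power_mono)
  moreover have "(c * t)\<^sup>2 \<le> t\<^sup>2"
    using assms(4-6) by (intro power_mono) (auto simp: mult_left_le_one_le)
  moreover have "2 * t * (c * d) \<le> 2 * t * (w \<bullet> v)" using assms(4,7) by (simp add: mult_left_mono)
  moreover have "(norm (v + t *\<^sub>R w))\<^sup>2 = (norm v)\<^sup>2 + 2 * t * (w \<bullet> v) + t\<^sup>2"
  proof -
    have "w \<bullet> w = 1" using assms(1) by (metis dot_square_norm power_one)
    then show ?thesis
      by (simp add: power2_norm_eq_inner inner_add_left inner_add_right inner_commute)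
         (simp add: power2_eq_square)
  qed
  moreover have "(d + c * t)\<^sup>2 = d\<^sup>2 + 2 * t * (c * d) + (c * t)\<^sup>2"
    by (simp add: power2_eq_square algebra_simps)
  ultimately show "(d + c * t)\<^sup>2 \<le> (norm (v + t *\<^sub>R w))\<^sup>2" by linarith
qed simp

lemma far_from_nearest_points_gap:
  fixes X :: "'a::heine_borel set"
  assumes "closed X" and "0 < \<eta>"
  shows "\<exists>\<gamma>>0. \<forall>a'\<in>X. (\<forall>a\<in>X. dist y a = infdist y X \<longrightarrow> \<eta> \<le> dist a' a) \<longrightarrow>
           infdist y X + \<gamma> \<le> dist y a'"
proof -
  define K where "K = X \<inter> (\<Inter>a\<in>{a\<in>X. dist y a = infdist y X}. {a'. \<eta> \<le> dist a' a})"
  have "closed K" unfolding K_def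
    by (intro closed_Int \<open>closed X\<close> closed_INT ballI closed_Collect_le continuous_intros)
  show ?thesis
  proof (cases "K = {}")
    case True
    then show ?thesis unfolding K_def by (intro exI[of _ 1]) auto
  next
    case False
    then obtain k where "k \<in> K" and k_min: "\<And>a'. a' \<in> K \<Longrightarrow> dist y k \<le> dist y a'"
      using distance_attains_inf[OF \<open>closed K\<close>, of y] by blast
    then have "k \<in> X" by (simp add: K_def)
    have "dist y k \<noteq> infdist y X"
    proof
      assume "dist y k = infdist y X"
      then have "\<eta> \<le> dist k k" using \<open>k \<in> K\<close> \<open>k \<in> X\<close> unfolding K_def by blast
      then show False using \<open>0 < \<eta>\<close> by simp
    qed
    then have "infdist y X < dist y k" using infdist_le[OF \<open>k \<in> X\<close>, of y] by linarith
    moreover have "dist y k \<le> dist y a'"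
      if "a' \<in> X" and "\<forall>a\<in>X. dist y a = infdist y X \<longrightarrow> \<eta> \<le> dist a' a" for a'
      using k_min that unfolding K_def by blast
    ultimately show ?thesis by (intro exI[of _ "dist y k - infdist y X"]) auto
  qed
qed

lemma infdist_ascent_direction:
  fixes X :: "'a::euclidean_space set"
  assumes "compact X" and pos: "0 < infdist y X"
    and Delta_ge: "mu \<le> Delta (clarke_grad (\<lambda>q. infdist q X) y)"
    and "0 \<le> c" and "c < mu" and "c \<le> 1"
  shows "\<exists>w \<tau>. norm w = 1 \<and> 0 < \<tau> \<and>
           (\<forall>t. 0 < t \<and> t < \<tau> \<longrightarrow> infdist y X + c * t \<le> infdist (y + t *\<^sub>R w) X)"
proof -
  define d where "d = infdist y X"
  have "closed X" using \<open>compact X\<close> by (rule compact_imp_closed)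
  have "X \<noteq> {}" using pos by (auto simp: infdist_def)
  obtain w where "norm w = 1" and w: "\<And>a. a \<in> X \<Longrightarrow> dist y a = d \<Longrightarrow> mu * d \<le> w \<bullet> (y - a)"
    using nearest_points_unit_separation[OF \<open>compact X\<close> pos _ Delta_ge] \<open>0 \<le> c\<close> \<open>c < mu\<close>
    unfolding d_def by auto
  have "0 < (mu - c) * d" using pos \<open>c < mu\<close> by (simp add: d_def)
  then obtain \<gamma> where "0 < \<gamma>" and \<gamma>: "\<And>a'. a' \<in> X \<Longrightarrow>
      \<forall>a\<in>X. dist y a = d \<longrightarrow> (mu - c) * d \<le> dist a' a \<Longrightarrow> d + \<gamma> \<le> dist y a'"
    using far_from_nearest_points_gap[OF \<open>closed X\<close>, of "(mu - c) * d" y] unfolding d_def by blast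
  have "d + c * t \<le> infdist (y + t *\<^sub>R w) X" if "0 < t" and "t < \<gamma> / 2" for t
  proof -
    obtain a' where "a' \<in> X" and a': "infdist (y + t *\<^sub>R w) X = dist (y + t *\<^sub>R w) a'"
      using infdist_attains_inf[OF \<open>closed X\<close> \<open>X \<noteq> {}\<close>] by blast
    have "d \<le> norm (y - a')" using infdist_le[OF \<open>a' \<in> X\<close>, of y] by (simp add: d_def dist_norm)
    consider (far) "\<forall>a\<in>X. dist y a = d \<longrightarrow> (mu - c) * d \<le> dist a' a"
      | (near) a where "a \<in> X" "dist y a = d" "dist a' a < (mu - c) * d"
      by force
    then have "d + c * t \<le> norm (y - a' + t *\<^sub>R w)"
    proof cases
      case far
      have "d + \<gamma> \<le> norm (y - a')" using \<gamma>[OF \<open>a' \<in> X\<close> far] by (simp add: dist_norm)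
      moreover have "norm (y - a') \<le> norm (y - a' + t *\<^sub>R w) + t"
        using norm_triangle_ineq4[of "y - a' + t *\<^sub>R w" "t *\<^sub>R w"] \<open>norm w = 1\<close> \<open>0 < t\<close> by simp
      moreover have "c * t \<le> t" using \<open>c \<le> 1\<close> \<open>0 < t\<close> by simp
      ultimately show ?thesis using \<open>t < \<gamma> / 2\<close> by linarith
    next
      case near
      have "w \<bullet> (a - a') \<ge> - norm (a - a')"
        using Cauchy_Schwarz_ineq2[of w "a - a'"] \<open>norm w = 1\<close> by simp
      moreover have "w \<bullet> (y - a') = w \<bullet> (y - a) + w \<bullet> (a - a')" by (simp add: inner_diff_right)
      moreover have "norm (a - a') < (mu - c) * d"
        using near by (simp add: dist_norm norm_minus_commute)
      ultimately have "c * d \<le> w \<bullet> (y - a')" using w[OF near(1,2)] by (simp add: algebra_simps)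
      then show ?thesis
        using norm_add_scaleR_unit_ge[OF \<open>norm w = 1\<close> _ \<open>d \<le> norm (y - a')\<close>] pos \<open>0 < t\<close>
          \<open>0 \<le> c\<close> \<open>c \<le> 1\<close> by (simp add: d_def)
    qed
    then show ?thesis using a' by (simp add: dist_norm algebra_simps)
  qed
  then show ?thesis unfolding d_def using \<open>norm w = 1\<close> \<open>0 < \<gamma>\<close>
    by (intro exI[of _ w] exI[of _ "\<gamma> / 2"]) auto
qed

lemma infdist_escape_to_sphere:
  fixes X :: "'a::euclidean_space set"
  assumes "compact X"
    and Delta_ge: "\<forall>y. 0 < infdist y X \<and> infdist y X \<le> s \<longrightarrow>
                     mu \<le> Delta (clarke_grad (\<lambda>z. infdist z X) y)"
    and "0 < infdist y\<^sub>0 X" and "0 < R" and "infdist y\<^sub>0 X + R \<le> s"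
    and "0 \<le> c" and "c < mu" and "mu \<le> 1"
  shows "\<exists>y. dist y y\<^sub>0 = R \<and> c * R < infdist y X"
proof -
  define \<Phi> where "\<Phi> q = infdist q X - c * dist q y\<^sub>0" for q
  have "continuous_on (cball y\<^sub>0 R) \<Phi>"
    unfolding \<Phi>_def by (intro continuous_intros continuous_on_infdist continuous_on_id)
  then obtain y where y: "y \<in> cball y\<^sub>0 R" and y_max: "\<And>q. q \<in> cball y\<^sub>0 R \<Longrightarrow> \<Phi> q \<le> \<Phi> y"
    using continuous_attains_sup[OF compact_cball] \<open>0 < R\<close>
    by (metis centre_in_cball less_imp_le empty_iff)
  have "\<Phi> y\<^sub>0 \<le> \<Phi> y" using y_max \<open>0 < R\<close> by simp
  then have y_far: "c * dist y y\<^sub>0 < infdist y X"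
    using \<open>0 < infdist y\<^sub>0 X\<close> by (simp add: \<Phi>_def)
  have "dist y y\<^sub>0 = R"
  proof (rule ccontr)
    assume "dist y y\<^sub>0 \<noteq> R"
    then have inside: "dist y y\<^sub>0 < R" using y by (simp add: dist_commute)
    have "0 < infdist y X" using y_far \<open>0 \<le> c\<close> by (smt (verit) mult_nonneg_nonneg zero_le_dist)
    moreover have "infdist y X \<le> s"
      using infdist_triangle[of y X y\<^sub>0] inside \<open>infdist y\<^sub>0 X + R \<le> s\<close> by linarith
    ultimately obtain w \<tau> where "norm w = 1" and "0 < \<tau>" and ascent:
      "\<And>t. 0 < t \<Longrightarrow> t < \<tau> \<Longrightarrow> infdist y X + (c + mu) / 2 * t \<le> infdist (y + t *\<^sub>R w) X"
      using infdist_ascent_direction[OF \<open>compact X\<close>, of y mu "(c + mu) / 2"] Delta_ge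
        \<open>0 \<le> c\<close> \<open>c < mu\<close> \<open>mu \<le> 1\<close> by auto
    define t where "t = min (\<tau> / 2) ((R - dist y y\<^sub>0) / 2)"
    have "0 < t" "t < \<tau>" using \<open>0 < \<tau>\<close> inside by (auto simp: t_def)
    have "t \<le> (R - dist y y\<^sub>0) / 2" unfolding t_def by (rule min.cobounded2)
    then have "dist y y\<^sub>0 + t < R" using inside by argo
    have step: "dist (y + t *\<^sub>R w) y\<^sub>0 \<le> dist y y\<^sub>0 + t"
      using dist_triangle[of "y + t *\<^sub>R w" y\<^sub>0 y] \<open>norm w = 1\<close> \<open>0 < t\<close> by (simp add: dist_norm)
    then have "y + t *\<^sub>R w \<in> cball y\<^sub>0 R"
      using \<open>dist y y\<^sub>0 + t < R\<close> by (simp add: dist_commute)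
    moreover have "\<Phi> y < \<Phi> (y + t *\<^sub>R w)"
    proof -
      have "c * dist (y + t *\<^sub>R w) y\<^sub>0 \<le> c * dist y y\<^sub>0 + c * t"
        using mult_left_mono[OF step \<open>0 \<le> c\<close>] by (simp add: distrib_left)
      moreover have "c * t < (c + mu) / 2 * t" using \<open>0 < t\<close> \<open>c < mu\<close> by simp
      ultimately show ?thesis
        using ascent[OF \<open>0 < t\<close> \<open>t < \<tau>\<close>] unfolding \<Phi>_def by linarith
    qed
    ultimately show False using y_max by fastforce
  qed
  then show ?thesis using y_far by blast
qed

lemma exists_escaping_point_near:
  fixes X :: "'a::euclidean_space set"
  assumes "compact X" and "x \<in> X" and "x \<notin> interior X"
    and Delta_ge: "\<forall>y. 0 < infdist y X \<and> infdist y X \<le> s \<longrightarrow>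
                     mu \<le> Delta (clarke_grad (\<lambda>z. infdist z X) y)"
    and "0 < \<rho>" and "\<rho> \<le> R" and "2 * R \<le> s"
    and "0 \<le> c" and "c < mu" and "mu \<le> 1"
  shows "\<exists>y\<^sub>0 y. dist y\<^sub>0 x < \<rho> \<and> dist y y\<^sub>0 = R \<and> c * R < infdist y X"
proof -
  obtain y\<^sub>0 where "y\<^sub>0 \<in> ball x \<rho>" and "y\<^sub>0 \<notin> X"
    using \<open>x \<notin> interior X\<close> \<open>0 < \<rho>\<close> unfolding mem_interior by blast
  then have "dist y\<^sub>0 x < \<rho>" by (simp add: dist_commute)
  have "0 < infdist y\<^sub>0 X"
    using infdist_pos_not_in_closed[OF compact_imp_closed[OF \<open>compact X\<close>] _ \<open>y\<^sub>0 \<notin> X\<close>]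
      \<open>x \<in> X\<close> by blast
  moreover have "infdist y\<^sub>0 X + R \<le> s"
    using infdist_le[OF \<open>x \<in> X\<close>, of y\<^sub>0] \<open>dist y\<^sub>0 x < \<rho>\<close> \<open>\<rho> \<le> R\<close> \<open>2 * R \<le> s\<close> by linarith
  ultimately obtain y where "dist y y\<^sub>0 = R" "c * R < infdist y X"
    using infdist_escape_to_sphere[OF \<open>compact X\<close> Delta_ge] \<open>0 < \<rho>\<close> \<open>\<rho> \<le> R\<close> assms(8-10)
    by (metis order_less_le_trans)
  then show ?thesis using \<open>dist y\<^sub>0 x < \<rho>\<close> by blast
qed

lemma reach_mu_pos_imp_Delta_ge:
  assumes "0 < reach_mu mu X"
  obtains s where "0 < s" and
    "\<forall>y. 0 < infdist y X \<and> infdist y X \<le> s \<longrightarrow> mu \<le> Delta (clarke_grad (\<lambda>z. infdist z X) y)"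
proof -
  from assms obtain s where "0 < ereal s" and
    "\<forall>y. 0 < infdist y X \<and> infdist y X \<le> s \<longrightarrow> mu \<le> Delta (clarke_grad (\<lambda>z. infdist z X) y)"
    unfolding reach_mu_def less_Sup_iff by blast
  then show ?thesis using that by simp
qed

lemma scaled_limit_in_tan_dirs:
  fixes A :: "'a::euclidean_space set"
  assumes "\<And>n. p n \<in> A - {x}" and "\<And>n. 0 < R n" and "R \<longlonglongrightarrow> 0"
    and lim: "(\<lambda>n. (p n - x) /\<^sub>R R n) \<longlonglongrightarrow> v" and "v \<noteq> 0"
  shows "sgn v \<in> tan_dirs A x"
proof -
  define q where "q n = (p n - x) /\<^sub>R R n" for n
  have "R n \<noteq> 0" for n using \<open>0 < R n\<close> by simp
  then have p_eq: "p = (\<lambda>n. x + R n *\<^sub>R q n)" by (simp add: q_def fun_eq_iff)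
  have "(\<lambda>n. x + R n *\<^sub>R q n) \<longlonglongrightarrow> x + 0 *\<^sub>R v"
    using \<open>R \<longlonglongrightarrow> 0\<close> lim unfolding q_def by (intro tendsto_intros)
  then have "p \<longlonglongrightarrow> x" by (simp add: p_eq)
  have dir_eq: "(p n - x) /\<^sub>R norm (p n - x) = sgn (q n)" for n
  proof -
    have "(p n - x) /\<^sub>R norm (p n - x) = sgn (R n *\<^sub>R q n)" by (simp add: p_eq sgn_div_norm)
    also have "\<dots> = sgn (q n)" using \<open>0 < R n\<close> by (simp add: sgn_scaleR)
    finally show ?thesis .
  qed
  have "(\<lambda>n. sgn (q n)) \<longlonglongrightarrow> sgn v"
    using lim \<open>v \<noteq> 0\<close> unfolding q_def by (rule tendsto_sgn)
  then show ?thesis unfolding tan_dirs_def mem_Collect_eq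
    by (intro exI[of _ p]) (use assms(1) \<open>p \<longlonglongrightarrow> x\<close> in \<open>auto simp: dir_eq\<close>)
qed

lemma cball_subset_Tan_ccompl:
  fixes X :: "'a::euclidean_space set"
  assumes "x \<in> X" and "0 < mu" and "\<And>k. 0 < R k" and "R \<longlonglongrightarrow> 0"
    and Y_lim: "(\<lambda>k. (Y k - x) /\<^sub>R R k) \<longlonglongrightarrow> u" and "u \<noteq> 0"
    and m_lim: "m \<longlonglongrightarrow> mu" and "\<And>k. 0 \<le> m k" and far: "\<And>k. m k * R k < infdist (Y k) X"
  shows "cball u mu \<subseteq> Tan (ccompl X) x"
proof -
  have dir: "sgn v \<in> tan_dirs (ccompl X) x" if "norm (v - u) \<le> mu" and "v \<noteq> 0" for v
  proof (rule scaled_limit_in_tan_dirs[OF _ \<open>\<And>k. 0 < R k\<close> \<open>R \<longlonglongrightarrow> 0\<close> _ \<open>v \<noteq> 0\<close>])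
    \<comment> \<open>The factor m k / mu tends to 1 and keeps p k within m k * R k of Y k.\<close>
    define p where "p k = Y k + (R k * (m k / mu)) *\<^sub>R (v - u)" for k
    show "p k \<in> ccompl X - {x}" for k
    proof -
      have "dist (Y k) (p k) = R k * (m k / mu) * norm (v - u)"
        using \<open>0 < R k\<close> \<open>0 \<le> m k\<close> \<open>0 < mu\<close> by (simp add: p_def dist_norm)
      also have "\<dots> \<le> R k * (m k / mu) * mu"
        using \<open>0 < R k\<close> \<open>0 \<le> m k\<close> \<open>0 < mu\<close> that(1) by (intro mult_left_mono) auto
      also have "\<dots> < infdist (Y k) X" using far[of k] \<open>0 < mu\<close> by (simp add: mult.commute)
      finally have "p k \<notin> X" using infdist_le[of "p k" X "Y k"] by auto
      then show ?thesis using \<open>x \<in> X\<close> closure_subset[of "UNIV - X"] by (auto simp: ccompl_def)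
    qed
    have "(\<lambda>k. (Y k - x) /\<^sub>R R k + (m k / mu) *\<^sub>R (v - u)) \<longlonglongrightarrow> u + (mu / mu) *\<^sub>R (v - u)"
      using Y_lim m_lim \<open>0 < mu\<close> by (intro tendsto_intros) auto
    moreover have "(p k - x) /\<^sub>R R k = (Y k - x) /\<^sub>R R k + (m k / mu) *\<^sub>R (v - u)" for k
    proof -
      have "p k - x = (Y k - x) + R k *\<^sub>R ((m k / mu) *\<^sub>R (v - u))" by (simp add: p_def)
      then show ?thesis using \<open>0 < R k\<close> by (simp only: scaleR_add_right) simp
    qed
    ultimately show "(\<lambda>k. (p k - x) /\<^sub>R R k) \<longlonglongrightarrow> v" using \<open>0 < mu\<close> by simp
  qed
  show ?thesis
  proof
    fix v assume "v \<in> cball u mu"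
    then have "norm (v - u) \<le> mu" by (simp add: dist_norm norm_minus_commute)
    show "v \<in> Tan (ccompl X) x"
    proof (cases "v = 0")
      case True
      then have "v = 0 *\<^sub>R sgn u" by simp
      then show ?thesis using dir[of u] \<open>0 < mu\<close> \<open>u \<noteq> 0\<close> unfolding Tan_def by fastforce
    next
      case False
      then have "v = norm v *\<^sub>R sgn v" by (simp add: sgn_div_norm)
      then show ?thesis using dir[OF \<open>norm (v - u) \<le> mu\<close> False] unfolding Tan_def by fastforce
    qed
  qed
qed

lemma exists_cball_subset_Tan_ccompl:
  fixes X :: "'a::euclidean_space set"
  assumes "x \<in> X" and "0 < mu" and R_pos: "\<And>n. 0 < R n" and "R \<longlonglongrightarrow> 0"
    and near: "\<And>n. dist (Y\<^sub>0 n) x \<le> t n * R n" and "t \<longlonglongrightarrow> 0"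
    and sphere: "\<And>n. dist (Y n) (Y\<^sub>0 n) = R n"
    and "m \<longlonglongrightarrow> mu" and "\<And>n. 0 \<le> m n" and "\<And>n. m n * R n < infdist (Y n) X"
  shows "\<exists>u. norm u = 1 \<and> cball u mu \<subseteq> Tan (ccompl X) x"
proof -
  define e where "e n = (Y n - Y\<^sub>0 n) /\<^sub>R R n" for n
  have "e n \<in> sphere 0 1" for n
    using sphere[of n] R_pos[of n] by (simp add: e_def dist_norm)
  then obtain r u where "u \<in> sphere 0 1" and "strict_mono r" and e_lim: "(e \<circ> r) \<longlonglongrightarrow> u"
    using compact_sphere[THEN compact_imp_seq_compact] by (metis seq_compactE)
  have "(\<lambda>k. (Y\<^sub>0 (r k) - x) /\<^sub>R R (r k)) \<longlonglongrightarrow> 0"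
  proof (rule Lim_null_comparison[OF always_eventually])
    show "\<forall>k. norm ((Y\<^sub>0 (r k) - x) /\<^sub>R R (r k)) \<le> (t \<circ> r) k"
    proof
      fix k
      have "norm ((Y\<^sub>0 (r k) - x) /\<^sub>R R (r k)) = dist (Y\<^sub>0 (r k)) x / R (r k)"
        using R_pos[of "r k"] by (simp add: dist_norm divide_inverse_commute)
      also have "\<dots> \<le> (t \<circ> r) k" using near[of "r k"] R_pos[of "r k"] by (simp add: pos_divide_le_eq)
      finally show "norm ((Y\<^sub>0 (r k) - x) /\<^sub>R R (r k)) \<le> (t \<circ> r) k" .
    qed
    show "(t \<circ> r) \<longlonglongrightarrow> 0" using \<open>t \<longlonglongrightarrow> 0\<close> \<open>strict_mono r\<close> by (rule LIMSEQ_subseq_LIMSEQ)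
  qed
  then have "(\<lambda>k. (Y\<^sub>0 (r k) - x) /\<^sub>R R (r k) + e (r k)) \<longlonglongrightarrow> 0 + u"
    using e_lim by (intro tendsto_add) (simp_all add: o_def)
  moreover have "(Y\<^sub>0 (r k) - x) /\<^sub>R R (r k) + e (r k) = (Y (r k) - x) /\<^sub>R R (r k)" for k
    by (simp add: e_def algebra_simps)
  ultimately have "(\<lambda>k. (Y (r k) - x) /\<^sub>R R (r k)) \<longlonglongrightarrow> u" by simp
  moreover have "(R \<circ> r) \<longlonglongrightarrow> 0" "(m \<circ> r) \<longlonglongrightarrow> mu"
    using assms(4,8) \<open>strict_mono r\<close> by (simp_all add: LIMSEQ_subseq_LIMSEQ)
  moreover have "u \<noteq> 0" "norm u = 1" using \<open>u \<in> sphere 0 1\<close> by auto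
  ultimately have "cball u mu \<subseteq> Tan (ccompl X) x"
    using cball_subset_Tan_ccompl[of x X mu "R \<circ> r" "Y \<circ> r" u "m \<circ> r"] assms by simp
  then show ?thesis using \<open>norm u = 1\<close> by blast
qed

theorem mainTheorem19:
  fixes X :: "'a::euclidean_space set" and mu :: real and x :: 'a
  assumes "0 < mu" and "mu \<le> 1"
    and "complementary_regular X"
    and "reach_mu mu X > 0"
    and "x \<in> frontier X"
  shows "\<exists>u. norm u = 1 \<and> cball u mu \<subseteq> Tan (ccompl X) x"
proof -
  have "compact X" using assms(3) by (simp add: complementary_regular_def)
  then have "x \<in> X" "x \<notin> interior X"
    using assms(5) frontier_subset_closed[OF compact_imp_closed] by (auto simp: frontier_def)
  obtain s where "0 < s" and Delta_ge: "\<forall>y. 0 < infdist y X \<and> infdist y X \<le> s \<longrightarrow>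
      mu \<le> Delta (clarke_grad (\<lambda>z. infdist z X) y)"
    using reach_mu_pos_imp_Delta_ge[OF assms(4)] by blast
  define t :: "nat \<Rightarrow> real" where "t n = 1 / (real n + 2)" for n
  define R where "R n = s * t n" for n
  define m where "m n = mu * (1 - t n)" for n
  have t: "0 < t n" "t n \<le> 1 / 2" for n by (simp_all add: t_def)
  have "0 < t n * R n" "t n * R n \<le> R n" "2 * R n \<le> s" "0 \<le> m n" "m n < mu" "0 < R n" for n
    using t[of n] \<open>0 < s\<close> \<open>0 < mu\<close> by (simp_all add: R_def m_def zero_le_mult_iff)
  then have "\<exists>y\<^sub>0 y. dist y\<^sub>0 x < t n * R n \<and> dist y y\<^sub>0 = R n \<and> m n * R n < infdist y X" for n
    using exists_escaping_point_near[OF \<open>compact X\<close> \<open>x \<in> X\<close> \<open>x \<notin> interior X\<close> Delta_ge] assms(2)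
    by blast
  then obtain Y\<^sub>0 Y where near: "\<And>n. dist (Y\<^sub>0 n) x < t n * R n"
    and sphere: "\<And>n. dist (Y n) (Y\<^sub>0 n) = R n" and far: "\<And>n. m n * R n < infdist (Y n) X"
    by metis
  have "t \<longlonglongrightarrow> 0" unfolding t_def by real_asymp
  then have "R \<longlonglongrightarrow> s * 0" "m \<longlonglongrightarrow> mu * (1 - 0)"
    unfolding R_def m_def by (intro tendsto_intros \<open>t \<longlonglongrightarrow> 0\<close>)+
  then show ?thesis
    using exists_cball_subset_Tan_ccompl[OF \<open>x \<in> X\<close> \<open>0 < mu\<close> \<open>\<And>n. 0 < R n\<close> _
        less_imp_le[OF near] \<open>t \<longlonglongrightarrow> 0\<close> sphere _ \<open>\<And>n. 0 \<le> m n\<close> far]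
    by simp
qed

end
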